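(* Let $F$ be a Boolean formula over $n$ variables, let $F'$ be the conjunction of $\log n$ copies of $F$ on pairwise disjoint fresh sets of variables, and let $m\ge1$. If $\varphi^{F'}_{holes}(m)$ is true, then $|\mathrm{Sol}(F')|\ge\frac{2^m}{m+1}$.
   Context: $\mathrm{Sol}(G)$ is the set of satisfying assignments of a Boolean formula $G$; $\log$ is base $2$ and $\log n$ is treated as an integer, so $F'$ has $N=n\log n$ variables. $\mathcal{H}(N,m,2)$ is a fixed explicit pairwise independent family of hash functions $\{0,1\}^N\to\{0,1\}^m$. The formula $\varphi^{F'}_{holes}(m)$ is $\exists h_1,\dots,h_{m+1}\in\mathcal{H}(N,m,2)\ \forall\alpha\in\{0,1\}^m\ \exists z\in\{0,1\}^N:\ \bigvee_{i=1}^{m+1}(F'(z)\wedge h_i(z)=\alpha)$. *)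

theory Defs
  imports Complex_Main
begin

text \<open>Assignments to N Boolean variables are bool lists of length N.
  A Boolean formula over n variables is a predicate on such lists.\<close>

definition Sol :: "nat \<Rightarrow> (bool list \<Rightarrow> bool) \<Rightarrow> bool list set" where
  "Sol n G = {x. length x = n \<and> G x}"

definition ilog :: "nat \<Rightarrow> nat" where
  "ilog n = nat \<lfloor>log 2 (real n)\<rfloor>"

text \<open>Conjunction of k copies of F (over n variables) on pairwise disjoint
  blocks of variables: block j consists of variables j*n .. j*n+n-1.\<close>
definition conj_copies :: "nat \<Rightarrow> nat \<Rightarrow> (bool list \<Rightarrow> bool) \<Rightarrow> bool list \<Rightarrow> bool" where
  "conj_copies n k F z = (\<forall>j<k. F (take n (drop (j * n) z)))"

definition pairwise_indep :: "(bool list \<Rightarrow> bool list) set \<Rightarrow> nat \<Rightarrow> nat \<Rightarrow> bool" where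
  "pairwise_indep H N m \<longleftrightarrow> finite H \<and> H \<noteq> {} \<and>
     (\<forall>h\<in>H. \<forall>x. length x = N \<longrightarrow> length (h x) = m) \<and>
     (\<forall>x y a b. length x = N \<and> length y = N \<and> x \<noteq> y \<and> length a = m \<and> length b = m \<longrightarrow>
        card {h\<in>H. h x = a \<and> h y = b} * 2 ^ (2 * m) = card H)"

definition phi_holes :: "(bool list \<Rightarrow> bool list) set \<Rightarrow> nat \<Rightarrow> (bool list \<Rightarrow> bool) \<Rightarrow> nat \<Rightarrow> bool" where
  "phi_holes H N G m \<longleftrightarrow>
     (\<exists>hs :: nat \<Rightarrow> (bool list \<Rightarrow> bool list). (\<forall>i\<in>{1..m+1}. hs i \<in> H) \<and>
        (\<forall>\<alpha>. length \<alpha> = m \<longrightarrow>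
           (\<exists>z. length z = N \<and> (\<exists>i\<in>{1..m+1}. G z \<and> hs i z = \<alpha>))))"

end

theory Submission
  imports Defs
begin

text \<open>If the formula holds, the images of the solution set under the \<open>m + 1\<close> chosen
  hash functions cover all \<open>2 ^ m\<close> strings of length \<open>m\<close>, so one of these images, and
  hence the solution set itself, has at least \<open>2 ^ m / (m + 1)\<close> elements.\<close>

lemma finite_Sol: "finite (Sol N G)"
proof (rule finite_subset)
  show "Sol N G \<subseteq> {xs. set xs \<subseteq> (UNIV :: bool set) \<and> length xs = N}"
    by (auto simp: Sol_def)
  show "finite {xs. set xs \<subseteq> (UNIV :: bool set) \<and> length xs = N}"
    by (rule finite_lists_length_eq) simp
qed

lemma card_bool_lists_length_eq: "card {xs :: bool list. length xs = m} = 2 ^ m"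
  using card_lists_length_eq[of "UNIV :: bool set" m] by simp

lemma card_le_if_covered_by_images:
  assumes "finite S" and "finite I" and "A \<subseteq> (\<Union>i\<in>I. f i ` S)"
  shows "card A \<le> card I * card S"
proof -
  have "card A \<le> card (\<Union>i\<in>I. f i ` S)"
    using assms by (intro card_mono) auto
  also have "\<dots> \<le> (\<Sum>i\<in>I. card (f i ` S))"
    by (rule card_UN_le[OF \<open>finite I\<close>])
  also have "\<dots> \<le> (\<Sum>i\<in>I. card S)"
    by (intro sum_mono card_image_le[OF \<open>finite S\<close>])
  finally show ?thesis by simp
qed

lemma phi_holes_card_Sol:
  assumes "phi_holes H N G m"
  shows "2 ^ m \<le> (m + 1) * card (Sol N G)"
proof -
  obtain hs :: "nat \<Rightarrow> bool list \<Rightarrow> bool list" where hs: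
    "\<And>\<alpha>. length \<alpha> = m \<Longrightarrow> \<exists>z. length z = N \<and> (\<exists>i\<in>{1..m+1}. G z \<and> hs i z = \<alpha>)"
    using assms unfolding phi_holes_def by blast
  have "{\<alpha> :: bool list. length \<alpha> = m} \<subseteq> (\<Union>i\<in>{1..m+1}. hs i ` Sol N G)"
  proof
    fix \<alpha> :: "bool list"
    assume "\<alpha> \<in> {\<alpha>. length \<alpha> = m}"
    then obtain z i where "length z = N" "i \<in> {1..m+1}" "G z" "hs i z = \<alpha>"
      using hs by blast
    then show "\<alpha> \<in> (\<Union>i\<in>{1..m+1}. hs i ` Sol N G)"
      by (auto simp: Sol_def)
  qed
  then have "card {\<alpha> :: bool list. length \<alpha> = m} \<le> card {1..m+1} * card (Sol N G)"
    by (intro card_le_if_covered_by_images finite_Sol) simp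
  then show ?thesis
    by (simp add: card_bool_lists_length_eq)
qed

theorem lemma5p4:
  fixes F :: "bool list \<Rightarrow> bool" and n m :: nat
    and H :: "(bool list \<Rightarrow> bool list) set"
  assumes "pairwise_indep H (n * ilog n) m"
    and "m \<ge> 1"
    and "phi_holes H (n * ilog n) (conj_copies n (ilog n) F) m"
  shows "real (card (Sol (n * ilog n) (conj_copies n (ilog n) F))) \<ge> 2 ^ m / (m + 1)"
proof -
  let ?S = "Sol (n * ilog n) (conj_copies n (ilog n) F)"
  have "2 ^ m \<le> (m + 1) * card ?S"
    using phi_holes_card_Sol[OF assms(3)] .
  then have "(2 :: real) ^ m \<le> (m + 1) * real (card ?S)"
    by (metis of_nat_1 of_nat_add of_nat_le_iff of_nat_mult of_nat_numeral of_nat_power)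
  then show ?thesis
    by (simp add: divide_le_eq mult.commute add.commute)
qed

end
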